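(* Let $D \subset \mathbb{Z}^m \setminus \{\mathbf{0}\}$ be a finite set with $D = -D$. Then for every non-zero Laurent polynomial \[ f(z_1, \ldots, z_m) = \sum_{d \in D} c_d z_1^{d_1}\cdots z_m^{d_m} \quad \text{with } c_{-d} = \overline{c_d} \text{ for all } d \in D, \] we have $\alpha(D) \leq \min(\rho_+(f), \rho_-(f))$; that is, $\alpha(D) \leq \rho(D)$.
   Context: Such $f$ is real-valued on $\mathbb{T}^m$, $\mathbb{T}$ the unit circle. $\lambda_m$ is the normalized Lebesgue (Haar) measure on $\mathbb{T}^m$ with $\lambda_m(\mathbb{T}^m) = 1$; $\rho_+(f) = \lambda_m(\{z \in \mathbb{T}^m : f(z) > 0\})$ and $\rho_-(f) = \lambda_m(\{z \in \mathbb{T}^m : f(z) < 0\})$. $\rho(D)$ is the least value of $\min(\rho_+(f), \rho_-(f))$ over all such non-zero $f$. The $m$-circulant graph $G_n$ with set of differences $D$ has vertex set $\{0, \ldots, n-1\}^m$, vertices $u, v$ (possibly equal) being adjacent iff $u - v$ is congruent coordinatewise modulo $n$ to some $d \in D$. $\alpha(G)$ is the maximum size of an independent set (no two adjacent vertices, no looped vertex), and $\alpha(D) := \lim_{n \to \infty} \alpha(G_n)/n^m$ (this limit exists). *)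

theory Defs
  imports "HOL-Probability.Probability"
begin

text \<open>Points of \<open>\<int>^m\<close> are functions \<open>'m \<Rightarrow> int\<close> for a finite index type \<open>'m\<close>
  (so \<open>m = CARD('m)\<close>).\<close>

definition torus :: "('m::finite \<Rightarrow> complex) set" where
  "torus = {z. \<forall>j. cmod (z j) = 1}"

definition haar_torus :: "('m::finite \<Rightarrow> complex) measure" where
  "haar_torus = distr (PiM UNIV (\<lambda>_. restrict_space lborel {0..<1::real}))
                      (PiM UNIV (\<lambda>_. borel))
                      (\<lambda>\<theta> j. cis (2 * pi * \<theta> j))"

definition laurent :: "('m::finite \<Rightarrow> int) set \<Rightarrow> (('m \<Rightarrow> int) \<Rightarrow> complex)
    \<Rightarrow> ('m \<Rightarrow> complex) \<Rightarrow> complex" where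
  "laurent D c z = (\<Sum>d\<in>D. c d * (\<Prod>j\<in>UNIV. z j powi d j))"

definition rho_plus :: "(('m::finite \<Rightarrow> complex) \<Rightarrow> complex) \<Rightarrow> real" where
  "rho_plus f = measure haar_torus {z \<in> torus. Re (f z) > 0}"

definition rho_minus :: "(('m::finite \<Rightarrow> complex) \<Rightarrow> complex) \<Rightarrow> real" where
  "rho_minus f = measure haar_torus {z \<in> torus. Re (f z) < 0}"

definition circ_vertices :: "nat \<Rightarrow> ('m::finite \<Rightarrow> int) set" where
  "circ_vertices n = {v. \<forall>j. 0 \<le> v j \<and> v j < int n}"

definition circ_adj :: "('m::finite \<Rightarrow> int) set \<Rightarrow> nat \<Rightarrow> ('m \<Rightarrow> int) \<Rightarrow> ('m \<Rightarrow> int) \<Rightarrow> bool" where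
  "circ_adj D n u v = (\<exists>d\<in>D. \<forall>j. (u j - v j) mod int n = d j mod int n)"

definition circ_independent :: "('m::finite \<Rightarrow> int) set \<Rightarrow> nat \<Rightarrow> ('m \<Rightarrow> int) set \<Rightarrow> bool" where
  "circ_independent D n S = (S \<subseteq> circ_vertices n \<and> (\<forall>u\<in>S. \<forall>v\<in>S. \<not> circ_adj D n u v))"

definition circ_alpha :: "('m::finite \<Rightarrow> int) set \<Rightarrow> nat \<Rightarrow> nat" where
  "circ_alpha D n = Max (card ` {S. circ_independent D n S})"

definition alpha_D :: "('m::finite \<Rightarrow> int) set \<Rightarrow> real" where
  "alpha_D D = lim (\<lambda>n. real (circ_alpha D n) / real n ^ CARD('m))"

end

(* Fix N, an independent set S of G_N and a shift \<theta> \<in> [0,1)^m, and let \<lambda>(y) = f(\<theta> + y/N) for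
   y \<in> {0..N-1}^m be the (real) values of f on the shifted grid.  For every a supported on S, the
   Fourier transform A(y) = \<Sum>\<^sub>s a(s) e(-s\<cdot>y/N), where e(x) = exp(2\<pi>ix), satisfies
   \<Sum>\<^sub>y \<lambda>(y) |A(y)|^2 = 0, because every frequency d - s + t (d \<in> D, s, t \<in> S) is nonzero modulo N
   by independence.  Hence A cannot vanish on {\<lambda> \<ge> 0} unless a = 0, and a dimension count gives
   |S| \<le> #{y. \<lambda>(y) \<ge> 0}.  Averaging over \<theta> turns the right-hand side into N^m times the measure
   of {f \<ge> 0}, which is \<rho>\<^sub>+(f) because the zero set of a nonzero trigonometric polynomial is null;
   replacing f by -f gives \<rho>\<^sub>-(f).  Finally \<alpha>(G_N)/N^m converges, since independent sets of G_n can
   be copied blockwise into G_N, so the bound passes to the limit \<alpha>(D). *)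

theory Submission
  imports Defs "HOL-Library.Function_Algebras" "HOL-Computational_Algebra.Polynomial"
begin

section \<open>Characters and trigonometric polynomials\<close>

definition e2pi :: "real \<Rightarrow> complex" where
  "e2pi x = cis (2 * pi * x)"

lemma e2pi_add: "e2pi (x + y) = e2pi x * e2pi y"
  by (simp add: e2pi_def cis_mult distrib_left)

lemma e2pi_0 [simp]: "e2pi 0 = 1"
  by (simp add: e2pi_def)

lemma e2pi_of_int [simp]: "e2pi (of_int k) = 1"
  by (simp add: e2pi_def)

lemma e2pi_nonzero [simp]: "e2pi x \<noteq> 0"
  by (simp add: e2pi_def)

lemma cnj_e2pi: "cnj (e2pi x) = e2pi (- x)"
  by (simp add: e2pi_def cis_cnj)

lemma e2pi_sum: "e2pi (sum f A) = (\<Prod>x\<in>A. e2pi (f x))"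
  by (induction A rule: infinite_finite_induct) (simp_all add: e2pi_add)

lemma e2pi_power: "e2pi x ^ n = e2pi (real n * x)"
  unfolding e2pi_def Complex.DeMoivre by (simp add: mult_ac)

lemma e2pi_power_int: "e2pi x powi k = e2pi (of_int k * x)"
  by (simp add: e2pi_def cis_power_int mult_ac)

lemma e2pi_eq_1_iff: "e2pi x = 1 \<longleftrightarrow> x \<in> \<int>"
proof
  assume "e2pi x = 1"
  then have "cos (2 * pi * x) = 1" by (auto simp: e2pi_def complex_eq_iff)
  then obtain k :: int where "2 * pi * x = real_of_int k * 2 * pi" by (auto simp: cos_one_2pi_int)
  then show "x \<in> \<int>" by simp
qed (auto elim: Ints_cases)

lemma e2pi_eq_1_iff_dvd:
  assumes "N > 0"
  shows "e2pi (of_int k / real N) = 1 \<longleftrightarrow> int N dvd k"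
proof -
  have "of_int k / real N \<in> \<int> \<longleftrightarrow> (\<exists>q. k = int N * q)"
    using assms by (auto elim!: Ints_cases simp: field_simps) (metis of_int_eq_iff of_int_mult of_int_of_nat_eq)
  then show ?thesis by (auto simp: e2pi_eq_1_iff dvd_def)
qed

lemma sum_e2pi_residues:
  assumes N: "N > 0"
  shows "(\<Sum>t\<in>{0..<int N}. e2pi (of_int (k * t) / real N)) = (if int N dvd k then of_nat N else 0)"
proof -
  define w where "w = e2pi (of_int k / real N)"
  have "{0..<int N} = int ` {..<N}" by (auto simp: image_iff intro!: bexI[of _ "nat _"])
  then have "(\<Sum>t\<in>{0..<int N}. e2pi (of_int (k * t) / real N)) = (\<Sum>t<N. w ^ t)"
    by (simp add: sum.reindex w_def e2pi_power mult_ac)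
  also have "\<dots> = (if int N dvd k then of_nat N else 0)"
  proof (cases "int N dvd k")
    case True
    then have "w = 1" using N by (simp add: w_def e2pi_eq_1_iff_dvd)
    then show ?thesis using True by simp
  next
    case False
    have "w ^ N = 1" using N by (simp add: w_def e2pi_power)
    moreover have "w \<noteq> 1" using False N by (simp add: w_def e2pi_eq_1_iff_dvd)
    ultimately show ?thesis using False by (simp add: geometric_sum)
  qed
  finally show ?thesis .
qed

definition zdot :: "('m::finite \<Rightarrow> int) \<Rightarrow> ('m \<Rightarrow> int) \<Rightarrow> int" where
  "zdot k y = (\<Sum>j\<in>UNIV. k j * y j)"

lemma zdot_add: "zdot (k + l) y = zdot k y + zdot l y"
  by (simp add: zdot_def sum.distrib algebra_simps)

lemma zdot_diff: "zdot (k - l) y = zdot k y - zdot l y"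
  by (simp add: zdot_def sum_subtractf algebra_simps)

definition grid_char :: "nat \<Rightarrow> ('m::finite \<Rightarrow> int) \<Rightarrow> ('m \<Rightarrow> int) \<Rightarrow> complex" where
  "grid_char N k y = e2pi (of_int (zdot k y) / real N)"

lemma grid_char_add: "grid_char N (k + l) y = grid_char N k y * grid_char N l y"
  by (simp add: grid_char_def zdot_add add_divide_distrib e2pi_add)

lemma circ_vertices_eq_PiE: "circ_vertices N = PiE UNIV (\<lambda>_. {0..<int N})"
  by (auto simp: circ_vertices_def PiE_UNIV_domain)

lemma finite_circ_vertices [simp]: "finite (circ_vertices N)"
  by (simp add: circ_vertices_eq_PiE finite_PiE)

lemma card_circ_vertices: "card (circ_vertices N :: ('m::finite \<Rightarrow> int) set) = N ^ CARD('m)"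
  by (simp add: circ_vertices_eq_PiE card_PiE)

lemma sum_grid_char:
  fixes k :: "'m::finite \<Rightarrow> int"
  assumes N: "N > 0"
  shows "(\<Sum>y\<in>circ_vertices N. grid_char N k y) =
         (if \<forall>j. int N dvd k j then of_nat N ^ CARD('m) else 0)"
proof -
  have "(\<Sum>y\<in>circ_vertices N. grid_char N k y) =
        (\<Sum>y\<in>PiE UNIV (\<lambda>_. {0..<int N}). \<Prod>j\<in>UNIV. e2pi (of_int (k j * y j) / real N))"
    by (simp add: circ_vertices_eq_PiE grid_char_def zdot_def sum_divide_distrib e2pi_sum)
  also have "\<dots> = (\<Prod>j\<in>UNIV. \<Sum>t\<in>{0..<int N}. e2pi (of_int (k j * t) / real N))"
    by (rule prod_sum_PiE[symmetric]) auto
  also have "\<dots> = (\<Prod>j\<in>UNIV. if int N dvd k j then of_nat N else 0)"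
    using N by (intro prod.cong refl sum_e2pi_residues)
  also have "\<dots> = (if \<forall>j. int N dvd k j then of_nat N ^ CARD('m) else 0)"
    by (auto simp: prod_constant prod_zero_iff)
  finally show ?thesis .
qed

definition rdot :: "('m::finite \<Rightarrow> int) \<Rightarrow> ('m \<Rightarrow> real) \<Rightarrow> real" where
  "rdot d \<theta> = (\<Sum>j\<in>UNIV. of_int (d j) * \<theta> j)"

definition trig_poly :: "('m::finite \<Rightarrow> int) set \<Rightarrow> (('m \<Rightarrow> int) \<Rightarrow> complex) \<Rightarrow> ('m \<Rightarrow> real) \<Rightarrow> complex" where
  "trig_poly D c \<theta> = (\<Sum>d\<in>D. c d * e2pi (rdot d \<theta>))"

definition grid_point :: "nat \<Rightarrow> ('m::finite \<Rightarrow> int) \<Rightarrow> 'm \<Rightarrow> real" where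
  "grid_point N y = (\<lambda>j. of_int (y j) / real N)"

lemma trig_poly_add:
  "trig_poly D c (\<theta> + a) = trig_poly D (\<lambda>d. c d * e2pi (rdot d a)) \<theta>"
  by (simp add: trig_poly_def rdot_def algebra_simps sum.distrib e2pi_add)

lemma trig_poly_add_of_int: "trig_poly D c (\<theta> + (\<lambda>j. of_int (k j))) = trig_poly D c \<theta>"
proof -
  have "rdot d (\<theta> + (\<lambda>j. of_int (k j))) = rdot d \<theta> + of_int (zdot d k)" for d
    by (simp add: rdot_def zdot_def algebra_simps sum.distrib)
  then show ?thesis
    by (simp add: trig_poly_def e2pi_add)
qed

lemma trig_poly_grid_point:
  "trig_poly D b (grid_point N y) = (\<Sum>d\<in>D. b d * grid_char N d y)"
  by (simp add: trig_poly_def rdot_def grid_point_def grid_char_def zdot_def sum_divide_distrib)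

lemma trig_poly_uminus: "trig_poly D (\<lambda>d. - c d) \<theta> = - trig_poly D c \<theta>"
  by (simp add: trig_poly_def sum_negf)

lemma trig_poly_real:
  assumes "\<forall>d\<in>D. - d \<in> D" and "\<forall>d\<in>D. c (- d) = cnj (c d)"
  shows "Im (trig_poly D c \<theta>) = 0"
proof -
  have "cnj (trig_poly D c \<theta>) = (\<Sum>d\<in>D. c (- d) * e2pi (rdot (- d) \<theta>))"
    using assms(2) by (auto simp: trig_poly_def rdot_def cnj_e2pi sum_negf intro!: sum.cong)
  also have "\<dots> = (\<Sum>d\<in>uminus ` D. c d * e2pi (rdot d \<theta>))"
    by (simp add: sum.reindex)
  also have "uminus ` D = D"
    using assms(1) by (auto simp: image_iff) (metis minus_minus)
  finally have "cnj (trig_poly D c \<theta>) = trig_poly D c \<theta>"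
    by (simp add: trig_poly_def)
  then show ?thesis
    by (simp add: Reals_cnj_iff[symmetric] complex_is_Real_iff[symmetric])
qed

section \<open>The grid bound for independent sets\<close>

lemma zdvd_abs_less_imp_eq_0:
  fixes n x :: int
  assumes "n dvd x" and "\<bar>x\<bar> < n"
  shows "x = 0"
  using dvd_imp_le_int[of x n] assms by fastforce

lemma circ_vertices_eq_if_dvd_diff:
  assumes "s \<in> circ_vertices N" and "t \<in> circ_vertices N" and "\<forall>j. int N dvd (s j - t j)"
  shows "s = t"
proof
  fix j
  have "0 \<le> s j" "s j < int N" "0 \<le> t j" "t j < int N"
    using assms(1,2) by (auto simp: circ_vertices_def)
  then have "\<bar>s j - t j\<bar> < int N"
    by linarith
  then show "s j = t j"
    using zdvd_abs_less_imp_eq_0 assms(3) by fastforce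
qed

lemma finite_if_circ_independent: "circ_independent D N S \<Longrightarrow> finite S"
  using finite_subset[OF _ finite_circ_vertices] by (auto simp: circ_independent_def)

lemma circ_adj_iff_dvd: "circ_adj D N u v \<longleftrightarrow> (\<exists>d\<in>D. \<forall>j. int N dvd (u j - v j - d j))"
  by (simp add: circ_adj_def mod_eq_dvd_iff)

lemma grid_char_diff: "grid_char N (k - l) y = grid_char N k y * cnj (grid_char N l y)"
  by (simp add: grid_char_def zdot_diff diff_divide_distrib e2pi_add[symmetric] cnj_e2pi)

definition dft :: "nat \<Rightarrow> ('m::finite \<Rightarrow> int) set \<Rightarrow> (('m \<Rightarrow> int) \<Rightarrow> complex) \<Rightarrow> ('m \<Rightarrow> int) \<Rightarrow> complex" where
  "dft N S a y = (\<Sum>s\<in>S. a s * cnj (grid_char N s y))"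

lemma dft_inversion:
  fixes S :: "('m::finite \<Rightarrow> int) set"
  assumes N: "N > 0" and S: "S \<subseteq> circ_vertices N" and s: "s \<in> S"
  shows "(\<Sum>y\<in>circ_vertices N. dft N S a y * grid_char N s y) = of_nat N ^ CARD('m) * a s"
proof -
  have fin: "finite S"
    using S finite_circ_vertices finite_subset by blast
  have "(\<Sum>y\<in>circ_vertices N. dft N S a y * grid_char N s y)
      = (\<Sum>y\<in>circ_vertices N. \<Sum>t\<in>S. a t * grid_char N (s - t) y)"
    unfolding dft_def grid_char_diff sum_distrib_right by (simp add: mult_ac)
  also have "\<dots> = (\<Sum>t\<in>S. a t * (\<Sum>y\<in>circ_vertices N. grid_char N (s - t) y))"
    by (subst sum.swap) (simp add: sum_distrib_left)
  also have "\<dots> = (\<Sum>t\<in>S. if t = s then of_nat N ^ CARD('m) * a s else 0)"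
  proof (intro sum.cong refl)
    fix t assume "t \<in> S"
    then have "(\<forall>j. int N dvd (s - t) j) \<longleftrightarrow> t = s"
      using circ_vertices_eq_if_dvd_diff[of s N t] s S by auto
    then show "a t * (\<Sum>y\<in>circ_vertices N. grid_char N (s - t) y)
        = (if t = s then of_nat N ^ CARD('m) * a s else 0)"
      by (simp add: sum_grid_char[OF N])
  qed
  also have "\<dots> = of_nat N ^ CARD('m) * a s"
    using fin s by simp
  finally show ?thesis .
qed

lemma dft_quadratic_form_eq_0:
  assumes N: "N > 0" and S: "circ_independent D N S"
  shows "(\<Sum>y\<in>circ_vertices N. trig_poly D b (grid_point N y) * (dft N S a y * cnj (dft N S a y))) = 0"
proof -
  have vanish: "(\<Sum>y\<in>circ_vertices N. grid_char N (d - s + t) y) = 0"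
    if d: "d \<in> D" and st: "s \<in> S" "t \<in> S" for d s t
  proof -
    have "\<not> circ_adj D N s t"
      using S st by (simp add: circ_independent_def)
    then obtain j where "\<not> int N dvd (s j - t j - d j)"
      using d by (auto simp: circ_adj_iff_dvd)
    moreover have "s j - t j - d j = - (d - s + t) j"
      by simp
    ultimately have "\<not> int N dvd (d - s + t) j"
      by (metis dvd_minus_iff)
    then show ?thesis
      by (auto simp: sum_grid_char[OF N])
  qed
  have expand: "trig_poly D b (grid_point N y) * (dft N S a y * cnj (dft N S a y))
      = (\<Sum>d\<in>D. \<Sum>s\<in>S. \<Sum>t\<in>S. b d * a s * cnj (a t) * grid_char N (d - s + t) y)" for y
  proof -
    have dft_sq: "dft N S a y * cnj (dft N S a y)
        = (\<Sum>s\<in>S. \<Sum>t\<in>S. a s * cnj (a t) * (cnj (grid_char N s y) * grid_char N t y))"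
      by (simp add: dft_def sum_product mult_ac)
    have char: "grid_char N (d - s + t) y = grid_char N d y * (cnj (grid_char N s y) * grid_char N t y)"
      for d s t
      by (simp add: grid_char_add grid_char_diff)
    show ?thesis
      unfolding dft_sq trig_poly_grid_point char sum_distrib_right
      unfolding sum_distrib_left by (simp add: mult_ac)
  qed
  have "(\<Sum>y\<in>circ_vertices N. trig_poly D b (grid_point N y) * (dft N S a y * cnj (dft N S a y)))
      = (\<Sum>d\<in>D. \<Sum>s\<in>S. \<Sum>t\<in>S. \<Sum>y\<in>circ_vertices N. b d * a s * cnj (a t) * grid_char N (d - s + t) y)"
    unfolding expand by (simp only: sum.swap[of _ "circ_vertices N"])
  also have "\<dots> = (\<Sum>d\<in>D. \<Sum>s\<in>S. \<Sum>t\<in>S. b d * a s * cnj (a t) * (\<Sum>y\<in>circ_vertices N. grid_char N (d - s + t) y))"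
    by (simp only: sum_distrib_left)
  also have "\<dots> = 0"
    by (simp add: vanish)
  finally show ?thesis .
qed

lemma dft_eq_0_if_vanishes_on_nonneg:
  fixes S :: "('m::finite \<Rightarrow> int) set"
  assumes N: "N > 0" and S: "circ_independent D N S"
    and Im_0: "\<And>y. y \<in> circ_vertices N \<Longrightarrow> Im (trig_poly D b (grid_point N y)) = 0"
    and vanish: "\<And>y. y \<in> circ_vertices N \<Longrightarrow> Re (trig_poly D b (grid_point N y)) \<ge> 0 \<Longrightarrow> dft N S a y = 0"
    and s: "s \<in> S"
  shows "a s = 0"
proof -
  define r where "r y = Re (trig_poly D b (grid_point N y))" for y
  define q where "q y = r y * (cmod (dft N S a y))\<^sup>2" for y
  have eq_q: "trig_poly D b (grid_point N y) * (dft N S a y * cnj (dft N S a y)) = of_real (q y)"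
    if "y \<in> circ_vertices N" for y
  proof -
    have "trig_poly D b (grid_point N y) = of_real (r y)"
      using Im_0[OF that] by (simp add: r_def complex_eq_iff)
    then show ?thesis
      by (simp add: q_def complex_norm_square[symmetric])
  qed
  have "of_real (\<Sum>y\<in>circ_vertices N. q y)
      = (\<Sum>y\<in>circ_vertices N. trig_poly D b (grid_point N y) * (dft N S a y * cnj (dft N S a y)))"
    unfolding of_real_sum by (intro sum.cong refl) (simp add: eq_q)
  then have "of_real (\<Sum>y\<in>circ_vertices N. q y) = (0::complex)"
    by (simp only: dft_quadratic_form_eq_0[OF N S])
  then have "(\<Sum>y\<in>circ_vertices N. - q y) = 0"
    by (simp only: of_real_eq_0_iff sum_negf neg_equal_0_iff_equal)
  moreover have "q y \<le> 0" if "y \<in> circ_vertices N" for y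
  proof (cases "r y \<ge> 0")
    case True
    then show ?thesis using vanish[OF that] by (simp add: q_def r_def)
  next
    case False
    then show ?thesis by (simp add: q_def mult_nonpos_nonneg)
  qed
  ultimately have q_0: "q y = 0" if "y \<in> circ_vertices N" for y
    using sum_nonneg_eq_0_iff[of "circ_vertices N" "\<lambda>y. - q y"] that by simp
  have "dft N S a y = 0" if "y \<in> circ_vertices N" for y
  proof (cases "r y \<ge> 0")
    case True
    then show ?thesis using vanish[OF that] by (simp add: r_def)
  next
    case False
    then show ?thesis using q_0[OF that] by (simp add: q_def)
  qed
  then have "of_nat N ^ CARD('m) * a s = 0"
    using dft_inversion[OF N _ s, of a] S by (simp add: circ_independent_def)
  then show ?thesis
    using N by simp
qed

lemma sum_fun_apply: "(\<Sum>a\<in>A. f a) x = (\<Sum>a\<in>A. f a x)"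
  by (induction A rule: infinite_finite_induct) auto

text \<open>The restrictions of the \<open>u s\<close> to \<open>P\<close> are linearly independent and lie in the span of the
  point masses at the elements of \<open>P\<close>.\<close>

lemma card_le_card_if_inj_linear:
  fixes u :: "'a \<Rightarrow> 'b \<Rightarrow> complex"
  assumes S: "finite S" and P: "finite P"
    and inj: "\<And>a s. (\<And>y. y \<in> P \<Longrightarrow> (\<Sum>s\<in>S. a s * u s y) = 0) \<Longrightarrow> s \<in> S \<Longrightarrow> a s = 0"
  shows "card S \<le> card P"
proof -
  interpret V: vector_space "\<lambda>(c::complex) (f::'b \<Rightarrow> complex) y. c * f y"
    by unfold_locales (auto simp: fun_eq_iff algebra_simps)
  define v where "v s = (\<lambda>y. if y \<in> P then u s y else 0)" for s
  define \<delta> where "\<delta> y = (\<lambda>x. if x = y then 1 else 0 :: complex)" for y :: 'b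
  have comb: "a s = 0" if "(\<Sum>s\<in>S. (\<lambda>y. a s * v s y)) = 0" "s \<in> S" for a s
  proof (rule inj[OF _ that(2)])
    fix y assume "y \<in> P"
    then show "(\<Sum>s\<in>S. a s * u s y) = 0"
      using fun_cong[OF that(1), of y] by (simp add: sum_fun_apply v_def)
  qed
  have inj_v: "inj_on v S"
  proof (rule inj_onI, rule ccontr)
    fix s t assume st: "s \<in> S" "t \<in> S" "v s = v t" "s \<noteq> t"
    define a where "a x = (if x = s then 1 else if x = t then -1 else 0 :: complex)" for x
    have "(\<Sum>x\<in>S. (\<lambda>y. a x * v x y))
        = (\<lambda>y. (\<Sum>x\<in>S. if x = s then v s y else 0) - (\<Sum>x\<in>S. if x = t then v t y else 0))"
      using st(4) by (auto simp: fun_eq_iff sum_fun_apply a_def sum_subtractf[symmetric] intro!: sum.cong)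
    also have "\<dots> = 0"
      using st S by (simp add: fun_eq_iff)
    finally have "a s = 0"
      using comb[of a s] st by simp
    then show False
      by (simp add: a_def)
  qed
  have "\<not> V.dependent (v ` S)"
  proof
    assume "V.dependent (v ` S)"
    then obtain w x where wx: "x \<in> v ` S" "w x \<noteq> 0" "(\<Sum>f\<in>v ` S. (\<lambda>y. w f * f y)) = 0"
      using V.dependent_finite[of "v ` S"] S by auto
    then have "(\<Sum>s\<in>S. (\<lambda>y. w (v s) * v s y)) = 0"
      by (simp add: sum.reindex[OF inj_v])
    then show False
      using comb[of "w \<circ> v"] wx(1,2) by auto
  qed
  moreover have "v ` S \<subseteq> V.span (\<delta> ` P)"
  proof clarify
    fix s assume "s \<in> S"
    have "v s = (\<Sum>y\<in>P. (\<lambda>x. u s y * \<delta> y x))"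
    proof
      fix x
      have "(\<Sum>y\<in>P. u s y * \<delta> y x) = (\<Sum>y\<in>P. if y = x then u s y else 0)"
        by (intro sum.cong) (auto simp: \<delta>_def)
      then show "v s x = (\<Sum>y\<in>P. (\<lambda>x. u s y * \<delta> y x)) x"
        using P by (simp add: sum_fun_apply v_def)
    qed
    also have "\<dots> \<in> V.span (\<delta> ` P)"
      by (intro V.span_sum V.span_scale V.span_base) auto
    finally show "v s \<in> V.span (\<delta> ` P)" .
  qed
  ultimately have "card (v ` S) \<le> card (\<delta> ` P)"
    using V.independent_span_bound P by blast
  also have "\<dots> \<le> card P"
    using P by (rule card_image_le)
  finally show ?thesis
    by (simp add: card_image[OF inj_v])
qed

lemma card_independent_le_card_nonneg:
  assumes N: "N > 0" and S: "circ_independent D N S"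
    and Im_0: "\<And>y. y \<in> circ_vertices N \<Longrightarrow> Im (trig_poly D b (grid_point N y)) = 0"
  shows "card S \<le> card {y\<in>circ_vertices N. Re (trig_poly D b (grid_point N y)) \<ge> 0}"
proof (rule card_le_card_if_inj_linear[where u = "\<lambda>s y. cnj (grid_char N s y)"])
  show "finite S"
    using S by (rule finite_if_circ_independent)
  show "finite {y\<in>circ_vertices N. Re (trig_poly D b (grid_point N y)) \<ge> 0}"
    by simp
  fix a s
  assume "\<And>y. y \<in> {y\<in>circ_vertices N. Re (trig_poly D b (grid_point N y)) \<ge> 0} \<Longrightarrow>
      (\<Sum>s\<in>S. a s * cnj (grid_char N s y)) = 0"
  then have "dft N S a y = 0" if "y \<in> circ_vertices N" "Re (trig_poly D b (grid_point N y)) \<ge> 0" for y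
    using that unfolding dft_def by blast
  then show "s \<in> S \<Longrightarrow> a s = 0"
    using dft_eq_0_if_vanishes_on_nonneg[OF N S Im_0] by blast
qed

section \<open>The uniform measure on the unit cube\<close>

definition unit_interval :: "real measure" where
  "unit_interval = restrict_space lborel {0..<1}"

lemma space_unit_interval: "space unit_interval = {0..<1}"
  by (simp add: unit_interval_def)

lemma sets_unit_interval_iff: "A \<in> sets unit_interval \<longleftrightarrow> A \<in> sets lborel \<and> A \<subseteq> {0..<1}"
  unfolding unit_interval_def by (subst sets_restrict_space_iff) auto

lemma prob_space_unit_interval: "prob_space unit_interval"
  unfolding unit_interval_def by (rule prob_spaceI) (simp add: emeasure_restrict_space)

lemma emeasure_lborel_vimage_plus:
  fixes c :: real
  assumes "X \<in> sets lborel"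
  shows "emeasure lborel ((+) c -` X) = emeasure lborel X"
proof -
  have "emeasure (distr lborel borel ((+) c)) X = emeasure lborel ((+) c -` X)"
    using assms by (subst emeasure_distr) auto
  then show ?thesis
    by (simp add: lborel_distr_plus)
qed

lemma sets_lborel_vimage_plus:
  fixes c :: real
  assumes "X \<in> sets lborel"
  shows "(+) c -` X \<in> sets lborel"
proof -
  have "(\<lambda>x. c + x) \<in> borel_measurable (borel :: real measure)"
    by measurable
  from measurable_sets[OF this] assms show ?thesis
    by simp
qed

lemma measurable_frac_plus: "(\<lambda>t. frac (t + b)) \<in> measurable unit_interval unit_interval"
proof -
  have "frac \<in> borel_measurable (borel :: real measure)"
    unfolding frac_def by measurable
  then show ?thesis
    unfolding unit_interval_def
    by (intro measurable_restrict_space1 measurable_restrict_space2) (auto simp: frac_lt_1)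
qed

text \<open>Rotation of the circle \<open>[0,1)\<close> by \<open>b\<close> moves \<open>A \<inter> [frac b, 1)\<close> and \<open>A \<inter> [0, frac b)\<close> by translations.\<close>

lemma emeasure_unit_interval_frac_plus:
  assumes A: "A \<in> sets unit_interval"
  shows "emeasure unit_interval ((\<lambda>t. frac (t + b)) -` A \<inter> space unit_interval) = emeasure unit_interval A"
proof -
  define b' where "b' = frac b"
  have b': "0 \<le> b'" "b' < 1"
    by (auto simp: b'_def frac_lt_1)
  have A_lborel: "A \<in> sets lborel" "A \<subseteq> {0..<1}"
    using A sets_unit_interval_iff by auto
  have frac_eq: "frac (t + b) = (if t + b' < 1 then t + b' else t + b' - 1)" if "t \<in> {0..<1}" for t
  proof -
    have "t + b - (t + b') \<in> \<int>" "t + b - (t + b' - 1) \<in> \<int>"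
      unfolding b'_def frac_def by auto
    then show ?thesis
      using that b' by (auto simp: frac_unique_iff)
  qed
  define P1 where "P1 = (+) b' -` (A \<inter> {b'..<1})"
  define P2 where "P2 = (+) (b' - 1) -` (A \<inter> {0..<b'})"
  have A12: "A \<inter> {b'..<1} \<in> sets lborel" "A \<inter> {0..<b'} \<in> sets lborel"
    using A_lborel by auto
  have "(\<lambda>t. frac (t + b)) -` A \<inter> space unit_interval = P1 \<union> P2"
    using A_lborel(2) b'
    by (auto simp: space_unit_interval frac_eq P1_def P2_def add_ac add_diff_eq split: if_splits)
  moreover have "emeasure unit_interval (P1 \<union> P2) = emeasure lborel (P1 \<union> P2)"
    unfolding unit_interval_def using b'
    by (intro emeasure_restrict_space) (auto simp: P1_def P2_def)
  moreover have "emeasure lborel (P1 \<union> P2) = emeasure lborel P1 + emeasure lborel P2"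
  proof (rule plus_emeasure[symmetric])
    show "P1 \<in> sets lborel" "P2 \<in> sets lborel"
      unfolding P1_def P2_def by (intro sets_lborel_vimage_plus A12)+
    show "P1 \<inter> P2 = {}"
      using b' by (auto simp: P1_def P2_def)
  qed
  moreover have "emeasure lborel P1 + emeasure lborel P2
      = emeasure lborel (A \<inter> {b'..<1}) + emeasure lborel (A \<inter> {0..<b'})"
    unfolding P1_def P2_def using A12 by (simp only: emeasure_lborel_vimage_plus)
  moreover have "\<dots> = emeasure lborel A"
  proof -
    have "A \<inter> {b'..<1} \<union> A \<inter> {0..<b'} = A"
      using A_lborel(2) b' by auto
    then show ?thesis
      using A12 by (subst plus_emeasure) auto
  qed
  moreover have "emeasure lborel A = emeasure unit_interval A"
    using A_lborel unfolding unit_interval_def by (simp add: emeasure_restrict_space)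
  ultimately show ?thesis
    by simp
qed

definition unit_cube :: "('m::finite \<Rightarrow> real) measure" where
  "unit_cube = PiM UNIV (\<lambda>_. unit_interval)"

lemma prob_space_unit_cube: "prob_space unit_cube"
  unfolding unit_cube_def by (intro prob_space_PiM prob_space_unit_interval)

lemma space_unit_cube: "space unit_cube = {\<theta>. \<forall>j. \<theta> j \<in> {0..<1}}"
  by (auto simp: unit_cube_def space_PiM space_unit_interval PiE_UNIV_domain)

lemma measurable_unit_cube_component [measurable]: "(\<lambda>\<theta>. \<theta> j) \<in> borel_measurable unit_cube"
proof -
  have "(\<lambda>t. t) \<in> borel_measurable unit_interval"
    unfolding unit_interval_def by (intro measurable_restrict_space1) simp
  then show ?thesis
    unfolding unit_cube_def by (rule measurable_compose[OF measurable_component_singleton, rotated]) simp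
qed

lemma measurable_unit_cube_frac_plus: "(\<lambda>\<theta> j. frac (\<theta> j + a j)) \<in> measurable unit_cube unit_cube"
proof -
  have "(\<lambda>\<theta>. frac (\<theta> j + a j)) \<in> measurable unit_cube unit_interval" for j
    using measurable_compose[OF measurable_component_singleton[of j UNIV "\<lambda>_. unit_interval"]
        measurable_frac_plus[of "a j"]]
    by (simp add: unit_cube_def)
  then show ?thesis
    by (subst (2) unit_cube_def, intro measurable_PiM_single')
       (auto simp: space_unit_cube space_unit_interval frac_lt_1)
qed

lemma distr_unit_cube_frac_plus:
  fixes a :: "'m::finite \<Rightarrow> real"
  shows "distr unit_cube unit_cube (\<lambda>\<theta> j. frac (\<theta> j + a j)) = unit_cube"
proof -
  interpret product_prob_space "\<lambda>_::'m. unit_interval"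
    by (intro product_prob_spaceI prob_space_unit_interval)
  show ?thesis
    unfolding unit_cube_def
  proof (rule PiM_eqI)
    fix A :: "'m \<Rightarrow> real set" assume A: "\<And>i. i \<in> UNIV \<Longrightarrow> A i \<in> sets unit_interval"
    have "(\<lambda>\<theta> j. frac (\<theta> j + a j)) -` Pi\<^sub>E UNIV A \<inter> space (Pi\<^sub>M UNIV (\<lambda>_. unit_interval))
        = Pi\<^sub>E UNIV (\<lambda>i. (\<lambda>t. frac (t + a i)) -` A i \<inter> space unit_interval)"
      by (auto simp: space_PiM PiE_def Pi_def)
    then have "emeasure (distr (Pi\<^sub>M UNIV (\<lambda>_. unit_interval)) (Pi\<^sub>M UNIV (\<lambda>_. unit_interval))
          (\<lambda>\<theta> j. frac (\<theta> j + a j))) (Pi\<^sub>E UNIV A)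
        = emeasure (Pi\<^sub>M UNIV (\<lambda>_. unit_interval)) (Pi\<^sub>E UNIV (\<lambda>i. (\<lambda>t. frac (t + a i)) -` A i \<inter> space unit_interval))"
      using measurable_unit_cube_frac_plus[of a] A
      by (subst emeasure_distr) (auto simp: unit_cube_def intro: sets_PiM_I_finite)
    also have "\<dots> = (\<Prod>i\<in>UNIV. emeasure unit_interval ((\<lambda>t. frac (t + a i)) -` A i \<inter> space unit_interval))"
      using A measurable_frac_plus by (intro emeasure_PiM) (auto intro: measurable_sets)
    also have "\<dots> = (\<Prod>i\<in>UNIV. emeasure unit_interval (A i))"
      using A by (intro prod.cong refl emeasure_unit_interval_frac_plus) auto
    finally show "emeasure (distr (Pi\<^sub>M UNIV (\<lambda>_. unit_interval)) (Pi\<^sub>M UNIV (\<lambda>_. unit_interval))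
          (\<lambda>\<theta> j. frac (\<theta> j + a j))) (Pi\<^sub>E UNIV A) = (\<Prod>i\<in>UNIV. emeasure unit_interval (A i))" .
  qed simp_all
qed

lemma measure_unit_cube_shift:
  assumes meas: "{\<theta>\<in>space unit_cube. Q \<theta>} \<in> sets unit_cube"
    and periodic: "\<And>\<theta> k. Q (\<theta> + (\<lambda>j. of_int (k j))) = Q \<theta>"
  shows "measure unit_cube {\<theta>\<in>space unit_cube. Q (\<theta> + a)} = measure unit_cube {\<theta>\<in>space unit_cube. Q \<theta>}"
proof -
  have Q_frac: "Q (\<theta> + a) = Q (\<lambda>j. frac (\<theta> j + a j))" for \<theta>
    using periodic[of "\<lambda>j. frac (\<theta> j + a j)" "\<lambda>j. \<lfloor>\<theta> j + a j\<rfloor>"]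
    by (simp add: frac_def plus_fun_def)
  have "measure unit_cube {\<theta>\<in>space unit_cube. Q \<theta>}
      = measure (distr unit_cube unit_cube (\<lambda>\<theta> j. frac (\<theta> j + a j))) {\<theta>\<in>space unit_cube. Q \<theta>}"
    by (simp add: distr_unit_cube_frac_plus)
  also have "\<dots> = measure unit_cube ((\<lambda>\<theta> j. frac (\<theta> j + a j)) -` {\<theta>\<in>space unit_cube. Q \<theta>} \<inter> space unit_cube)"
    by (rule measure_distr[OF measurable_unit_cube_frac_plus meas])
  also have "(\<lambda>\<theta> j. frac (\<theta> j + a j)) -` {\<theta>\<in>space unit_cube. Q \<theta>} \<inter> space unit_cube
      = {\<theta>\<in>space unit_cube. Q (\<theta> + a)}"
    by (auto simp: space_unit_cube frac_lt_1 Q_frac)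
  finally show ?thesis ..
qed

lemma card_eq_sum_indicator:
  "finite Y \<Longrightarrow> real (card {y\<in>Y. x \<in> A y}) = (\<Sum>y\<in>Y. indicator (A y) x)"
  unfolding indicator_def of_bool_def by (subst sum.inter_filter[symmetric]) simp_all

lemma (in prob_space) sum_prob_eq_expectation_card:
  assumes "finite Y" and "\<And>y. y \<in> Y \<Longrightarrow> A y \<in> events"
  shows "integrable M (\<lambda>x. real (card {y\<in>Y. x \<in> A y}))"
    and "(\<Sum>y\<in>Y. prob (A y)) = expectation (\<lambda>x. real (card {y\<in>Y. x \<in> A y}))"
  using assms by (simp_all add: card_eq_sum_indicator integral_sum emeasure_eq_measure)

lemma (in prob_space) le_sum_prob_if_le_card:
  assumes "finite Y" and "\<And>y. y \<in> Y \<Longrightarrow> A y \<in> events"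
    and "\<And>x. x \<in> space M \<Longrightarrow> K \<le> real (card {y\<in>Y. x \<in> A y})"
  shows "K \<le> (\<Sum>y\<in>Y. prob (A y))"
  using assms sum_prob_eq_expectation_card[OF assms(1,2)] by (auto intro: integral_ge_const)

lemma (in prob_space) sum_prob_le_if_card_le:
  assumes "finite Y" and "\<And>y. y \<in> Y \<Longrightarrow> A y \<in> events"
    and "\<And>x. x \<in> space M \<Longrightarrow> real (card {y\<in>Y. x \<in> A y}) \<le> K"
  shows "(\<Sum>y\<in>Y. prob (A y)) \<le> K"
  using assms sum_prob_eq_expectation_card[OF assms(1,2)] by (auto intro: integral_le_const)

lemma borel_measurable_cis [measurable]: "cis \<in> borel_measurable borel"
  by (intro borel_measurable_continuous_onI continuous_intros)

lemma borel_measurable_trig_poly [measurable]: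
  "(\<lambda>\<theta>. trig_poly D c \<theta>) \<in> borel_measurable unit_cube"
  unfolding trig_poly_def e2pi_def rdot_def by measurable

lemma laurent_cis: "laurent D c (\<lambda>j. cis (2 * pi * \<theta> j)) = trig_poly D c \<theta>"
proof -
  have "(\<Prod>j\<in>UNIV. cis (2 * pi * \<theta> j) powi d j) = e2pi (rdot d \<theta>)" for d
    by (simp add: e2pi_def[symmetric] e2pi_power_int rdot_def e2pi_sum)
  then show ?thesis
    by (simp add: laurent_def trig_poly_def)
qed

lemma measure_haar_torus_laurent:
  fixes P :: "complex \<Rightarrow> bool" and D :: "('m::finite \<Rightarrow> int) set"
  assumes P: "{x \<in> space borel. P x} \<in> sets borel"
  shows "measure haar_torus {z \<in> torus. P (laurent D c z)}
    = measure unit_cube {\<theta>\<in>space unit_cube. P (trig_poly D c \<theta>)}"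
proof -
  have cis_meas: "(\<lambda>\<theta> j. cis (2 * pi * \<theta> j)) \<in> measurable unit_cube (PiM UNIV (\<lambda>_. borel))"
    by (intro measurable_PiM_single') (auto simp: space_PiM)
  have "torus = {z \<in> space (PiM UNIV (\<lambda>_::'m. borel)). \<forall>j\<in>UNIV. cmod (z j) = 1}"
    by (auto simp: torus_def space_PiM)
  also have "\<dots> \<in> sets (PiM UNIV (\<lambda>_::'m. borel))"
    by measurable
  finally have "{z \<in> torus. P (laurent D c z)} \<in> sets (PiM UNIV (\<lambda>_::'m. borel))"
    using P unfolding laurent_def power_int_def by measurable
  then have "measure haar_torus {z \<in> torus. P (laurent D c z)}
      = measure unit_cube ((\<lambda>\<theta> j. cis (2 * pi * \<theta> j)) -` {z \<in> torus. P (laurent D c z)} \<inter> space unit_cube)"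
    unfolding haar_torus_def unit_cube_def[symmetric] unit_interval_def[symmetric]
    by (rule measure_distr[OF cis_meas])
  also have "(\<lambda>\<theta> j. cis (2 * pi * \<theta> j)) -` {z \<in> torus. P (laurent D c z)} \<inter> space unit_cube
      = {\<theta>\<in>space unit_cube. P (trig_poly D c \<theta>)}"
    by (auto simp: torus_def laurent_cis)
  finally show ?thesis .
qed

lemma rho_plus_laurent:
  fixes D :: "('m::finite \<Rightarrow> int) set"
  shows "rho_plus (laurent D c) = measure unit_cube {\<theta>\<in>space unit_cube. Re (trig_poly D c \<theta>) > 0}"
  unfolding rho_plus_def by (rule measure_haar_torus_laurent) measurable

lemma rho_minus_laurent:
  fixes D :: "('m::finite \<Rightarrow> int) set"
  shows "rho_minus (laurent D c) = measure unit_cube {\<theta>\<in>space unit_cube. Re (trig_poly D c \<theta>) < 0}"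
  unfolding rho_minus_def by (rule measure_haar_torus_laurent) measurable

section \<open>Zeros of trigonometric polynomials\<close>

text \<open>Kronecker substitution: take \<open>v j = B ^ idx j\<close> for an integer \<open>B\<close> that is not a root of any of the
  finitely many nonzero polynomials \<open>\<Sum>\<^sub>j (d j - d' j) X ^ idx j\<close>, \<open>d \<noteq> d'\<close> in \<open>D\<close>.\<close>

lemma exists_inj_on_zdot:
  fixes D :: "('m::finite \<Rightarrow> int) set"
  assumes fin: "finite D"
  shows "\<exists>v. inj_on (\<lambda>d. zdot d v) D"
proof -
  obtain idx :: "'m \<Rightarrow> nat" where idx: "inj idx"
    using finite_imp_inj_to_nat_seg[of "UNIV :: 'm set"] by auto
  define q where "q d d' = (\<Sum>j\<in>UNIV. monom (d j - d' j) (idx j) :: int poly)" for d d' :: "'m \<Rightarrow> int"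
  have q_nonzero: "q d d' \<noteq> 0" if ne: "d \<noteq> d'" for d d'
  proof -
    obtain j0 where j0: "d j0 \<noteq> d' j0"
      using ne by (auto simp: fun_eq_iff)
    have "coeff (q d d') (idx j0) = (\<Sum>j\<in>UNIV. if j = j0 then d j - d' j else 0)"
      unfolding q_def coeff_sum coeff_monom by (intro sum.cong refl) (auto simp: inj_eq[OF idx])
    with j0 show ?thesis
      by auto
  qed
  define R where "R = (\<Union>p\<in>{p\<in>D \<times> D. fst p \<noteq> snd p}. {x. poly (q (fst p) (snd p)) x = 0})"
  have "finite {p\<in>D \<times> D. fst p \<noteq> snd p}"
    using fin by (auto intro: finite_subset[of _ "D \<times> D"])
  then have "finite R"
    unfolding R_def using q_nonzero by (auto intro!: poly_roots_finite)
  then obtain B where B: "B \<notin> R"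
    using ex_new_if_finite[OF infinite_UNIV_int] by blast
  have "inj_on (\<lambda>d. zdot d (\<lambda>j. B ^ idx j)) D"
  proof (rule inj_onI, rule ccontr)
    fix d d' assume "d \<in> D" "d' \<in> D" "zdot d (\<lambda>j. B ^ idx j) = zdot d' (\<lambda>j. B ^ idx j)" "d \<noteq> d'"
    moreover have "poly (q d d') B = zdot d (\<lambda>j. B ^ idx j) - zdot d' (\<lambda>j. B ^ idx j)"
      by (simp add: q_def poly_sum poly_monom zdot_def sum_subtractf left_diff_distrib)
    ultimately show False
      using B by (auto simp: R_def)
  qed
  then show ?thesis
    by blast
qed

text \<open>Multiplying by \<open>z ^ M\<close> turns the Laurent polynomial into a polynomial of degree at most \<open>2 M\<close>.\<close>

lemma
  fixes b :: "'a \<Rightarrow> 'b::field" and g :: "'a \<Rightarrow> int"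
  assumes fin: "finite D" and inj: "inj_on g D" and d0: "d0 \<in> D" "b d0 \<noteq> 0"
  shows finite_nonzero_roots_laurent: "finite {z. z \<noteq> 0 \<and> (\<Sum>d\<in>D. b d * z powi g d) = 0}"
    and card_nonzero_roots_laurent_le:
      "card {z. z \<noteq> 0 \<and> (\<Sum>d\<in>D. b d * z powi g d) = 0} \<le> 2 * (\<Sum>d\<in>D. nat \<bar>g d\<bar>)"
proof -
  define M where "M = (\<Sum>d\<in>D. nat \<bar>g d\<bar>)"
  have g_bound: "\<bar>g d\<bar> \<le> int M" if "d \<in> D" for d
  proof -
    have "nat \<bar>g d\<bar> \<le> M"
      unfolding M_def using that fin by (intro member_le_sum) auto
    then show ?thesis
      by (simp add: nat_le_iff)
  qed
  define p where "p = (\<Sum>d\<in>D. monom (b d) (nat (g d + int M)))"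
  have "coeff p (nat (g d0 + int M)) = (\<Sum>d\<in>D. if d = d0 then b d else 0)"
    unfolding p_def coeff_sum coeff_monom
  proof (intro sum.cong refl)
    fix d assume "d \<in> D"
    then have "nat (g d + int M) = nat (g d0 + int M) \<longleftrightarrow> g d = g d0"
      using g_bound[of d] g_bound[OF d0(1)] by (simp add: eq_nat_nat_iff)
    also have "\<dots> \<longleftrightarrow> d = d0"
      using inj d0(1) \<open>d \<in> D\<close> by (auto dest: inj_onD)
    finally show "(if nat (g d + int M) = nat (g d0 + int M) then b d else 0) = (if d = d0 then b d else 0)"
      by simp
  qed
  then have p_nonzero: "p \<noteq> 0"
    using fin d0 by auto
  have "degree p \<le> 2 * M"
    unfolding p_def
  proof (rule degree_sum_le[OF fin])
    fix d assume "d \<in> D"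
    then have "nat (g d + int M) \<le> 2 * M"
      using g_bound[of d] by linarith
    then show "degree (monom (b d) (nat (g d + int M))) \<le> 2 * M"
      using degree_monom_le order_trans by blast
  qed
  have "poly p z = z ^ M * (\<Sum>d\<in>D. b d * z powi g d)" if "z \<noteq> 0" for z
  proof -
    have "z ^ nat (g d + int M) = z powi g d * z ^ M" if "d \<in> D" for d
      using g_bound[OF that] \<open>z \<noteq> 0\<close>
      by (simp add: power_int_of_nat[symmetric] power_int_add del: power_int_of_nat)
    then show ?thesis
      by (simp add: p_def poly_sum poly_monom sum_distrib_left mult_ac)
  qed
  then have roots: "{z. z \<noteq> 0 \<and> (\<Sum>d\<in>D. b d * z powi g d) = 0} \<subseteq> {z. poly p z = 0}"
    by auto
  show "finite {z. z \<noteq> 0 \<and> (\<Sum>d\<in>D. b d * z powi g d) = 0}"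
    using roots poly_roots_finite[OF p_nonzero] by (rule finite_subset)
  have "card {z. z \<noteq> 0 \<and> (\<Sum>d\<in>D. b d * z powi g d) = 0} \<le> card {z. poly p z = 0}"
    using roots poly_roots_finite[OF p_nonzero] by (rule card_mono[rotated])
  also have "\<dots> \<le> 2 * M"
    using card_poly_roots_bound[OF p_nonzero] \<open>degree p \<le> 2 * M\<close> by linarith
  finally show "card {z. z \<noteq> 0 \<and> (\<Sum>d\<in>D. b d * z powi g d) = 0} \<le> 2 * (\<Sum>d\<in>D. nat \<bar>g d\<bar>)"
    by (simp add: M_def)
qed

lemma inj_on_e2pi_grid:
  assumes N: "N > 0"
  shows "inj_on (\<lambda>t. e2pi (real t / real N)) {..<N}"
proof (rule inj_onI)
  fix t t' assume t: "t \<in> {..<N}" "t' \<in> {..<N}" and eq: "e2pi (real t / real N) = e2pi (real t' / real N)"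
  have "e2pi (of_int (int t - int t') / real N) = e2pi (real t / real N) * cnj (e2pi (real t' / real N))"
    by (simp add: cnj_e2pi e2pi_add[symmetric] diff_divide_distrib)
  also have "\<dots> = 1"
    using eq by (simp add: e2pi_def complex_norm_square[symmetric])
  finally have "int N dvd (int t - int t')"
    using e2pi_eq_1_iff_dvd[OF N] by blast
  moreover have "\<bar>int t - int t'\<bar> < int N"
    using t by auto
  ultimately show "t = t'"
    using zdvd_abs_less_imp_eq_0 by fastforce
qed

lemma card_zeros_on_grid_line_le:
  assumes fin: "finite D" and inj: "inj_on (\<lambda>d. zdot d v) D" and d0: "d0 \<in> D" "c d0 \<noteq> 0"
    and N: "N > 0"
  shows "card {t\<in>{..<N}. trig_poly D c (\<theta> + grid_point N (\<lambda>j. int t * v j)) = 0}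
    \<le> 2 * (\<Sum>d\<in>D. nat \<bar>zdot d v\<bar>)"
proof -
  define Z where "Z = {t\<in>{..<N}. trig_poly D c (\<theta> + grid_point N (\<lambda>j. int t * v j)) = 0}"
  define b where "b d = c d * e2pi (rdot d \<theta>)" for d
  define z where "z t = e2pi (real t / real N)" for t :: nat
  have "trig_poly D c (\<theta> + grid_point N (\<lambda>j. int t * v j)) = (\<Sum>d\<in>D. b d * z t powi zdot d v)" for t
  proof -
    have "zdot d (\<lambda>j. int t * v j) = int t * zdot d v" for d
      by (simp add: zdot_def sum_distrib_left mult_ac)
    then have "grid_char N d (\<lambda>j. int t * v j) = z t powi zdot d v" for d
      by (simp add: grid_char_def z_def e2pi_power_int mult_ac)
    then show ?thesis
      by (subst add.commute) (simp add: trig_poly_add trig_poly_grid_point b_def)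
  qed
  then have roots: "z ` Z \<subseteq> {w. w \<noteq> 0 \<and> (\<Sum>d\<in>D. b d * w powi zdot d v) = 0}"
    by (auto simp: Z_def z_def)
  have b_d0: "b d0 \<noteq> 0"
    using d0 by (simp add: b_def)
  have "inj_on z Z"
    using inj_on_e2pi_grid[OF N] unfolding z_def by (rule inj_on_subset) (auto simp: Z_def)
  then have "card Z = card (z ` Z)"
    by (simp add: card_image)
  also have "\<dots> \<le> card {w. w \<noteq> 0 \<and> (\<Sum>d\<in>D. b d * w powi zdot d v) = 0}"
    by (rule card_mono[OF finite_nonzero_roots_laurent[where b = b, OF fin inj d0(1) b_d0] roots])
  also have "\<dots> \<le> 2 * (\<Sum>d\<in>D. nat \<bar>zdot d v\<bar>)"
    by (rule card_nonzero_roots_laurent_le[where b = b, OF fin inj d0(1) b_d0])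
  finally show ?thesis
    unfolding Z_def .
qed

text \<open>On the \<open>N\<close> equally spaced points \<open>\<theta> + t v / N\<close> of a line the function has at most \<open>K\<close> zeros,
  independently of \<open>N\<close>; by rotation invariance the zero set therefore has measure at most \<open>K / N\<close>.\<close>

lemma null_zeros_trig_poly:
  fixes D :: "('m::finite \<Rightarrow> int) set"
  assumes fin: "finite D" and nonzero: "\<exists>d\<in>D. c d \<noteq> 0"
  shows "measure unit_cube {\<theta>\<in>space unit_cube. trig_poly D c \<theta> = 0} = 0"
proof -
  interpret prob_space "unit_cube :: ('m \<Rightarrow> real) measure"
    by (rule prob_space_unit_cube)
  obtain v where inj: "inj_on (\<lambda>d. zdot d v) D"
    using exists_inj_on_zdot[OF fin] by blast
  obtain d0 where d0: "d0 \<in> D" "c d0 \<noteq> 0"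
    using nonzero by blast
  define K where "K = 2 * (\<Sum>d\<in>D. nat \<bar>zdot d v\<bar>)"
  define \<mu> where "\<mu> = prob {\<theta>\<in>space unit_cube. trig_poly D c \<theta> = 0}"
  have bound: "real N * \<mu> \<le> real K" if N: "N > 0" for N
  proof -
    define A where "A t = {\<theta>\<in>space unit_cube. trig_poly D c (\<theta> + grid_point N (\<lambda>j. int t * v j)) = 0}"
      for t :: nat
    have "prob (A t) = \<mu>" for t
      unfolding A_def \<mu>_def
      by (rule measure_unit_cube_shift[where Q = "\<lambda>\<theta>. trig_poly D c \<theta> = 0"])
         (measurable, simp add: trig_poly_add_of_int)
    then have "real N * \<mu> = (\<Sum>t<N. prob (A t))"
      by simp
    also have "\<dots> \<le> real K"
    proof (rule sum_prob_le_if_card_le)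
      show "A t \<in> events" for t
        unfolding A_def trig_poly_add by measurable
      show "real (card {t\<in>{..<N}. \<theta> \<in> A t}) \<le> real K" if "\<theta> \<in> space unit_cube" for \<theta>
        using card_zeros_on_grid_line_le[where c = c and \<theta> = \<theta>, OF fin inj d0 N, folded K_def] that
        by (simp add: A_def)
    qed simp
    finally show ?thesis .
  qed
  have "\<not> \<mu> > 0"
  proof
    assume "\<mu> > 0"
    define N where "N = nat \<lceil>real K / \<mu>\<rceil> + 1"
    have "real K < real N * \<mu>"
      using \<open>\<mu> > 0\<close> by (simp add: N_def pos_divide_less_eq[symmetric]) linarith
    with bound[of N] show False
      by (simp add: N_def)
  qed
  then show ?thesis
    using measure_nonneg[of unit_cube] by (simp add: \<mu>_def not_less order.antisym)
qed

section \<open>Independence ratios of circulant graphs\<close>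

lemma card_independent_le_measure_nonneg:
  fixes D :: "('m::finite \<Rightarrow> int) set"
  assumes N: "N > 0" and S: "circ_independent D N S"
    and sym: "\<forall>d\<in>D. - d \<in> D" and herm: "\<forall>d\<in>D. c (- d) = cnj (c d)"
  shows "real (card S) \<le> real N ^ CARD('m) * measure unit_cube {\<theta>\<in>space unit_cube. Re (trig_poly D c \<theta>) \<ge> 0}"
proof -
  interpret prob_space "unit_cube :: ('m \<Rightarrow> real) measure"
    by (rule prob_space_unit_cube)
  define A where "A y = {\<theta>\<in>space unit_cube. Re (trig_poly D c (\<theta> + grid_point N y)) \<ge> 0}" for y
  have A_shift: "A y = {\<theta>\<in>space unit_cube. Re (trig_poly D (\<lambda>d. c d * e2pi (rdot d (grid_point N y))) \<theta>) \<ge> 0}" for y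
    by (simp add: A_def trig_poly_add)
  have prob_A: "prob (A y) = prob {\<theta>\<in>space unit_cube. Re (trig_poly D c \<theta>) \<ge> 0}" for y
    unfolding A_def
    by (rule measure_unit_cube_shift[where Q = "\<lambda>\<theta>. Re (trig_poly D c \<theta>) \<ge> 0"])
       (measurable, simp add: trig_poly_add_of_int)
  have "real (card S) \<le> (\<Sum>y\<in>circ_vertices N. prob (A y))"
  proof (rule le_sum_prob_if_le_card)
    show "A y \<in> events" for y
      unfolding A_shift by measurable
    fix \<theta> :: "'m \<Rightarrow> real"
    assume "\<theta> \<in> space unit_cube"
    have shift: "trig_poly D (\<lambda>d. c d * e2pi (rdot d \<theta>)) (grid_point N y) = trig_poly D c (\<theta> + grid_point N y)"
      for y
      by (subst add.commute) (rule trig_poly_add[symmetric])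
    have "card S \<le> card {y\<in>circ_vertices N. Re (trig_poly D (\<lambda>d. c d * e2pi (rdot d \<theta>)) (grid_point N y)) \<ge> 0}"
      using trig_poly_real[OF sym herm] by (intro card_independent_le_card_nonneg[OF N S]) (simp add: shift)
    then show "real (card S) \<le> real (card {y\<in>circ_vertices N. \<theta> \<in> A y})"
      using \<open>\<theta> \<in> space unit_cube\<close> by (simp add: A_def shift)
  qed simp
  also have "\<dots> = real N ^ CARD('m) * prob {\<theta>\<in>space unit_cube. Re (trig_poly D c \<theta>) \<ge> 0}"
    by (simp add: prob_A card_circ_vertices)
  finally show ?thesis .
qed

lemma finite_circ_independent_sets: "finite {S. circ_independent D N S}"
  by (rule finite_subset[of _ "Pow (circ_vertices N)"]) (auto simp: circ_independent_def)

lemma card_le_circ_alpha: "circ_independent D N S \<Longrightarrow> card S \<le> circ_alpha D N"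
  unfolding circ_alpha_def using finite_circ_independent_sets by (intro Max_ge) auto

lemma circ_alpha_attained:
  obtains S where "circ_independent D N S" and "card S = circ_alpha D N"
proof -
  have "circ_independent D N {}"
    by (simp add: circ_independent_def)
  then have "circ_alpha D N \<in> card ` {S. circ_independent D N S}"
    unfolding circ_alpha_def using finite_circ_independent_sets by (intro Max_in) auto
  then show ?thesis
    using that by force
qed

lemma circ_alpha_le: "circ_alpha D N \<le> N ^ CARD('m)" for D :: "('m::finite \<Rightarrow> int) set"
proof -
  obtain S where S: "circ_independent D N S" "card S = circ_alpha D N"
    by (rule circ_alpha_attained)
  then have "card S \<le> card (circ_vertices N :: ('m \<Rightarrow> int) set)"
    by (intro card_mono) (auto simp: circ_independent_def)
  then show ?thesis
    using S by (simp add: card_circ_vertices)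
qed

lemma card_independent_le_rho_plus:
  fixes D :: "('m::finite \<Rightarrow> int) set"
  assumes N: "N > 0" and S: "circ_independent D N S" and fin: "finite D"
    and sym: "\<forall>d\<in>D. - d \<in> D" and herm: "\<forall>d\<in>D. c (- d) = cnj (c d)" and nonzero: "\<exists>d\<in>D. c d \<noteq> 0"
  shows "real (card S) \<le> real N ^ CARD('m) * rho_plus (laurent D c)"
proof -
  interpret prob_space "unit_cube :: ('m \<Rightarrow> real) measure"
    by (rule prob_space_unit_cube)
  have "{\<theta>\<in>space unit_cube. Re (trig_poly D c \<theta>) \<ge> 0}
      \<subseteq> {\<theta>\<in>space unit_cube. Re (trig_poly D c \<theta>) > 0} \<union> {\<theta>\<in>space unit_cube. trig_poly D c \<theta> = 0}"
    using trig_poly_real[OF sym herm] by (auto simp: complex_eq_iff)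
  then have "prob {\<theta>\<in>space unit_cube. Re (trig_poly D c \<theta>) \<ge> 0}
      \<le> prob {\<theta>\<in>space unit_cube. Re (trig_poly D c \<theta>) > 0} + prob {\<theta>\<in>space unit_cube. trig_poly D c \<theta> = 0}"
    by (intro order.trans[OF finite_measure_mono measure_subadditive]) measurable
  also have "\<dots> = rho_plus (laurent D c)"
    by (simp add: null_zeros_trig_poly[OF fin nonzero] rho_plus_laurent)
  finally have "real N ^ CARD('m) * prob {\<theta>\<in>space unit_cube. Re (trig_poly D c \<theta>) \<ge> 0}
      \<le> real N ^ CARD('m) * rho_plus (laurent D c)"
    by (rule mult_left_mono) simp
  then show ?thesis
    using card_independent_le_measure_nonneg[OF N S sym herm] by linarith
qed

lemma rho_minus_eq_rho_plus_uminus: "rho_minus (laurent D c) = rho_plus (laurent D (\<lambda>d. - c d))"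
  by (simp add: rho_minus_laurent rho_plus_laurent trig_poly_uminus)

lemma circ_alpha_density_le_rho:
  fixes D :: "('m::finite \<Rightarrow> int) set"
  assumes N: "N > 0" and fin: "finite D"
    and sym: "\<forall>d\<in>D. - d \<in> D" and herm: "\<forall>d\<in>D. c (- d) = cnj (c d)" and nonzero: "\<exists>d\<in>D. c d \<noteq> 0"
  shows "real (circ_alpha D N) / real N ^ CARD('m) \<le> min (rho_plus (laurent D c)) (rho_minus (laurent D c))"
proof -
  obtain S where S: "circ_independent D N S" "card S = circ_alpha D N"
    by (rule circ_alpha_attained)
  have "real (card S) \<le> real N ^ CARD('m) * rho_plus (laurent D c)"
    by (rule card_independent_le_rho_plus[OF N S(1) fin sym herm nonzero])
  moreover have "real (card S) \<le> real N ^ CARD('m) * rho_minus (laurent D c)"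
    unfolding rho_minus_eq_rho_plus_uminus
    by (rule card_independent_le_rho_plus[OF N S(1) fin sym]) (use herm nonzero in auto)
  ultimately show ?thesis
    using N S(2) by (simp add: pos_divide_le_eq mult.commute)
qed

lemma circ_adj_imp_exact_diff:
  assumes adj: "circ_adj D N u v" and R: "\<forall>d\<in>D. \<forall>j. \<bar>d j\<bar> \<le> int R"
    and u: "\<forall>j. 0 \<le> u j \<and> u j < int M" and v: "\<forall>j. 0 \<le> v j \<and> v j < int M" and MN: "M + R \<le> N"
  shows "\<exists>d\<in>D. u - v = d"
proof -
  obtain d where d: "d \<in> D" and dvd: "\<forall>j. int N dvd (u j - v j - d j)"
    using adj by (auto simp: circ_adj_iff_dvd)
  have "u j - v j - d j = 0" for j
  proof (rule zdvd_abs_less_imp_eq_0)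
    show "int N dvd (u j - v j - d j)"
      using dvd by blast
    show "\<bar>u j - v j - d j\<bar> < int N"
    proof -
      have "\<bar>d j\<bar> \<le> int R"
        using R d by blast
      moreover have "int M + int R \<le> int N"
        using MN by linarith
      ultimately show ?thesis
        using u[rule_format, of j] v[rule_format, of j] by linarith
    qed
  qed
  with d show ?thesis
    by (auto simp: fun_eq_iff)
qed

definition block_copies :: "nat \<Rightarrow> nat \<Rightarrow> ('m::finite \<Rightarrow> int) set \<Rightarrow> ('m \<Rightarrow> int) set" where
  "block_copies L n S = (\<lambda>(q, s) j. q j * int n + s j) ` (circ_vertices L \<times> S)"

lemma card_block_copies:
  fixes S :: "('m::finite \<Rightarrow> int) set"
  assumes S: "S \<subseteq> circ_vertices n"
  shows "card (block_copies L n S) = L ^ CARD('m) * card S"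
proof -
  define f where "f = (\<lambda>(q, s) (j::'m). q j * int n + s j)"
  have f_mod: "f (q, s) j mod int n = s j" "f (q, s) j div int n = q j" if "s \<in> S" for q s j
  proof -
    have "0 \<le> s j" "s j < int n"
      using S that by (auto simp: circ_vertices_def)
    then show "f (q, s) j mod int n = s j" "f (q, s) j div int n = q j"
      by (simp_all add: f_def add.commute)
  qed
  have "inj_on f (circ_vertices L \<times> S)"
  proof (rule inj_onI, clarify)
    fix q s q' s' assume "s \<in> S" "s' \<in> S" "f (q, s) = f (q', s')"
    then show "q = q' \<and> s = s'"
      using f_mod by (metis ext)
  qed
  then show ?thesis
    unfolding block_copies_def f_def[symmetric] card_image[OF \<open>inj_on f _\<close>] card_cartesian_product
    by (simp add: card_circ_vertices)
qed

lemma block_copies_bounds: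
  assumes "S \<subseteq> circ_vertices n" and "x \<in> block_copies L n S"
  shows "0 \<le> x j" and "x j < int (L * n)"
proof -
  obtain q s where q: "\<forall>j. 0 \<le> q j \<and> q j < int L" and s: "\<forall>j. 0 \<le> s j \<and> s j < int n"
    and x: "x = (\<lambda>j. q j * int n + s j)"
    using assms by (auto simp: block_copies_def circ_vertices_def)
  have q_j: "0 \<le> q j" "q j < int L" and s_j: "0 \<le> s j" "s j < int n"
    using q s by auto
  have "q j * int n + s j < (q j + 1) * int n"
    using s_j by (simp add: algebra_simps)
  also have "\<dots> \<le> int L * int n"
    using q_j by (intro mult_right_mono) auto
  finally show "0 \<le> x j" "x j < int (L * n)"
    using q_j s_j x by auto
qed

text \<open>The margin \<open>R\<close> prevents new adjacencies by wrap-around modulo \<open>N\<close>.\<close>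

lemma circ_independent_block_copies:
  assumes R: "\<forall>d\<in>D. \<forall>j. \<bar>d j\<bar> \<le> int R" and LN: "L * n + R \<le> N" and S: "circ_independent D n S"
  shows "circ_independent D N (block_copies L n S)"
  unfolding circ_independent_def
proof (intro conjI ballI)
  have S_grid: "S \<subseteq> circ_vertices n"
    using S by (simp add: circ_independent_def)
  show "block_copies L n S \<subseteq> circ_vertices N"
  proof
    fix x assume x: "x \<in> block_copies L n S"
    have "0 \<le> x j \<and> x j < int N" for j
      using block_copies_bounds[OF S_grid x, of j] LN by linarith
    then show "x \<in> circ_vertices N"
      by (simp add: circ_vertices_def)
  qed
  fix u v assume uv: "u \<in> block_copies L n S" "v \<in> block_copies L n S"
  then obtain qu su qv sv where s: "su \<in> S" "sv \<in> S"
    and u: "u = (\<lambda>j. qu j * int n + su j)" and v: "v = (\<lambda>j. qv j * int n + sv j)"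
    by (auto simp: block_copies_def)
  show "\<not> circ_adj D N u v"
  proof
    assume "circ_adj D N u v"
    moreover have "\<forall>j. 0 \<le> u j \<and> u j < int (L * n)" "\<forall>j. 0 \<le> v j \<and> v j < int (L * n)"
      using block_copies_bounds[OF S_grid] uv by auto
    ultimately obtain d where d: "d \<in> D" "u - v = d"
      using circ_adj_imp_exact_diff[OF _ R] LN by blast
    have "(su j - sv j) mod int n = d j mod int n" for j
    proof -
      have "d j = (su j - sv j) + (qu j - qv j) * int n"
        using fun_cong[OF d(2), of j] u v by (simp add: algebra_simps)
      then show ?thesis
        by simp
    qed
    then have "circ_adj D n su sv"
      using d(1) by (auto simp: circ_adj_def)
    then show False
      using S s by (auto simp: circ_independent_def)
  qed
qed

lemma circ_alpha_lift:
  fixes D :: "('m::finite \<Rightarrow> int) set"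
  assumes R: "\<forall>d\<in>D. \<forall>j. \<bar>d j\<bar> \<le> int R" and LN: "L * n + R \<le> N"
  shows "L ^ CARD('m) * circ_alpha D n \<le> circ_alpha D N"
proof -
  obtain S where S: "circ_independent D n S" "card S = circ_alpha D n"
    by (rule circ_alpha_attained)
  then have "card (block_copies L n S) = L ^ CARD('m) * circ_alpha D n"
    by (simp add: card_block_copies circ_independent_def)
  moreover have "card (block_copies L n S) \<le> circ_alpha D N"
    by (intro card_le_circ_alpha circ_independent_block_copies[OF R LN S(1)])
  ultimately show ?thesis
    by simp
qed

lemma circ_alpha_density_ge:
  fixes D :: "('m::finite \<Rightarrow> int) set"
  assumes n: "n > 0" and R: "\<forall>d\<in>D. \<forall>j. \<bar>d j\<bar> \<le> int R" and N: "R + n \<le> N"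
  shows "(1 - real (R + n) / real N) ^ CARD('m) * (real (circ_alpha D n) / real n ^ CARD('m))
    \<le> real (circ_alpha D N) / real N ^ CARD('m)"
proof -
  define L where "L = (N - R) div n"
  have "L * n + R \<le> N"
    using N div_times_less_eq_dividend[of "N - R" n] unfolding L_def by linarith
  moreover have "N - R < L * n + n"
    using mod_less_divisor[OF n, of "N - R"] div_mult_mod_eq[of "N - R" n] unfolding L_def by linarith
  ultimately have LN: "real N - real (R + n) \<le> real (L * n)"
    by linarith
  have N_pos: "real N > 0"
    using n N by simp
  have "1 - real (R + n) / real N = (real N - real (R + n)) / real N"
    using N_pos by (simp add: diff_divide_distrib)
  then have base: "0 \<le> 1 - real (R + n) / real N" "1 - real (R + n) / real N \<le> real (L * n) / real N"
    using N N_pos LN by (simp_all add: divide_right_mono)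
  have "(1 - real (R + n) / real N) ^ CARD('m) * (real (circ_alpha D n) / real n ^ CARD('m))
      \<le> (real (L * n) / real N) ^ CARD('m) * (real (circ_alpha D n) / real n ^ CARD('m))"
    using base by (intro mult_right_mono power_mono) auto
  also have "\<dots> = real (L ^ CARD('m) * circ_alpha D n) / real N ^ CARD('m)"
    using n by (simp add: power_divide power_mult_distrib)
  also have "\<dots> \<le> real (circ_alpha D N) / real N ^ CARD('m)"
    using circ_alpha_lift[OF R \<open>L * n + R \<le> N\<close>] by (intro divide_right_mono of_nat_mono) auto
  finally show ?thesis .
qed

lemma LIMSEQ_SUP_if_eventually_ge:
  fixes X :: "nat \<Rightarrow> real"
  assumes bdd: "bdd_above (range X)"
    and ev: "\<And>n e. e > 0 \<Longrightarrow> eventually (\<lambda>N. X n - e < X N) sequentially"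
  shows "X \<longlonglongrightarrow> (SUP N. X N)"
proof (rule order_tendstoI)
  fix a assume "a < (SUP N. X N)"
  then obtain n where "a < X n"
    using less_cSUP_iff[OF _ bdd] by blast
  then show "eventually (\<lambda>N. a < X N) sequentially"
    using ev[of "X n - a" n] by simp
next
  fix a assume "(SUP N. X N) < a"
  then show "eventually (\<lambda>N. X N < a) sequentially"
    using cSUP_upper[OF _ bdd] by (intro always_eventually allI) (meson UNIV_I le_less_trans)
qed

lemma finite_imp_coordinates_bounded:
  fixes D :: "('m::finite \<Rightarrow> int) set"
  assumes fin: "finite D"
  obtains R where "\<forall>d\<in>D. \<forall>j. \<bar>d j\<bar> \<le> int R"
proof
  define R where "R = nat (\<Sum>d\<in>D. \<Sum>j\<in>UNIV. \<bar>d j\<bar>)"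
  show "\<forall>d\<in>D. \<forall>j. \<bar>d j\<bar> \<le> int R"
  proof (intro ballI allI)
    fix d j assume "d \<in> D"
    have "\<bar>d j\<bar> \<le> (\<Sum>j\<in>UNIV. \<bar>d j\<bar>)"
      by (rule member_le_sum) auto
    also have "\<dots> \<le> (\<Sum>d\<in>D. \<Sum>j\<in>UNIV. \<bar>d j\<bar>)"
      using \<open>d \<in> D\<close> fin by (intro member_le_sum) (auto intro: sum_nonneg)
    finally show "\<bar>d j\<bar> \<le> int R"
      unfolding R_def by linarith
  qed
qed

lemma convergent_circ_alpha_density:
  fixes D :: "('m::finite \<Rightarrow> int) set"
  assumes fin: "finite D"
  shows "convergent (\<lambda>N. real (circ_alpha D N) / real N ^ CARD('m))"
proof -
  define X where "X N = real (circ_alpha D N) / real N ^ CARD('m)" for N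
  obtain R where R: "\<forall>d\<in>D. \<forall>j. \<bar>d j\<bar> \<le> int R"
    using fin by (rule finite_imp_coordinates_bounded)
  have X_nonneg: "0 \<le> X N" for N
    by (simp add: X_def)
  have "X N \<le> 1" for N
  proof -
    have "real (circ_alpha D N) \<le> real N ^ CARD('m)"
      using circ_alpha_le[of D N] by (metis of_nat_le_iff of_nat_power)
    then show ?thesis
      by (cases "N = 0") (simp_all add: X_def divide_le_eq_1)
  qed
  then have "X \<longlonglongrightarrow> (SUP N. X N)"
  proof (intro LIMSEQ_SUP_if_eventually_ge bdd_aboveI2)
    fix n and e :: real assume "e > 0"
    show "eventually (\<lambda>N. X n - e < X N) sequentially"
    proof (cases "n = 0")
      case True
      then have "X n = 0"
        by (simp add: X_def zero_power)
      then have "X n - e < X N" for N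
        using \<open>e > 0\<close> X_nonneg[of N] by linarith
      then show ?thesis
        by (simp add: always_eventually)
    next
      case False
      have "(\<lambda>N. (1 - real (R + n) / real N) ^ CARD('m) * X n) \<longlonglongrightarrow> (1 - 0) ^ CARD('m) * X n"
        by (intro tendsto_intros lim_const_over_n)
      then have "eventually (\<lambda>N. X n - e < (1 - real (R + n) / real N) ^ CARD('m) * X n) sequentially"
        using \<open>e > 0\<close> by (intro order_tendstoD(1)) auto
      moreover have "eventually (\<lambda>N. R + n \<le> N) sequentially"
        by (rule eventually_ge_at_top)
      ultimately show ?thesis
      proof eventually_elim
        case (elim N)
        then have "(1 - real (R + n) / real N) ^ CARD('m) * X n \<le> X N"
          using circ_alpha_density_ge[OF _ R elim(2)] False unfolding X_def by blast
        with elim(1) show ?case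
          by linarith
      qed
    qed
  qed
  then have "convergent X"
    by (rule convergentI)
  then show ?thesis
    unfolding X_def[abs_def] .
qed

theorem theorem7:
  fixes D :: "('m::finite \<Rightarrow> int) set" and c :: "('m \<Rightarrow> int) \<Rightarrow> complex"
  assumes "finite D" and "(\<lambda>_. 0) \<notin> D" and "\<forall>d\<in>D. (\<lambda>j. - d j) \<in> D"
    and "\<forall>d\<in>D. c (\<lambda>j. - d j) = cnj (c d)"
    and "\<exists>d\<in>D. c d \<noteq> 0"
  shows "alpha_D D \<le> min (rho_plus (laurent D c)) (rho_minus (laurent D c))"
proof -
  have sym: "\<forall>d\<in>D. - d \<in> D" and herm: "\<forall>d\<in>D. c (- d) = cnj (c d)"
    using assms(3,4) by (simp_all add: fun_Compl_def)
  have "(\<lambda>N. real (circ_alpha D N) / real N ^ CARD('m)) \<longlonglongrightarrow> alpha_D D"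
    unfolding alpha_D_def using convergent_circ_alpha_density[OF assms(1)] by (rule convergent_LIMSEQ_iff[THEN iffD1])
  moreover have "\<forall>N\<ge>1. real (circ_alpha D N) / real N ^ CARD('m) \<le> min (rho_plus (laurent D c)) (rho_minus (laurent D c))"
    using circ_alpha_density_le_rho[OF _ assms(1) sym herm assms(5)] by simp
  ultimately show ?thesis
    by (intro LIMSEQ_le_const2) blast+
qed

end
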